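(* Let $r\ge 3$, $1\le t\le r-2$ and $n\ge 2$ be integers, and let $|X_\ell|=n$ for all $1\le\ell\le r$. Let $\mathcal F\subseteq X_1\times\dots\times X_r$ be a non-trivial $t$-intersecting family such that for every $1\le\ell\le r$, $\mathcal F$ is either $\ell$-shifted or $\ell$-shift-resistant, and such that $\mathcal F$ is not coordinate-wise shifted. Then $$|\mathcal F|\le (t+2)n^{r-t-1}-(t+1)n^{r-t-2}.$$
   Context: Let $X_\ell=[n_\ell]$ for $1\le \ell\le r$. For $A,B\in X_1\times\dots\times X_r$, write $A\cap B=\{\ell:A[\ell]=B[\ell]\}$ ($A[\ell]$ the $\ell$-th coordinate). $\mathcal F$ is $t$-intersecting if $|A\cap B|\ge t$ for all $A,B\in\mathcal F$; $\bigcap\mathcal F$ is the set of coordinates on which all members of $\mathcal F$ agree; a $t$-intersecting $\mathcal F$ is non-trivial if $|\bigcap\mathcal F|<t$. For $1\le\ell\le r$ and $1<j\le n_\ell$, the shift $S^{(\ell)}_j$ acts on $F\in\mathcal F$ by: if $F[\ell]=j$ and the sequence $F'$ obtained from $F$ by replacing its $\ell$-th coordinate by $1$ is not in $\mathcal F$, then $S^{(\ell)}_j(F)=F'$; otherwise $S^{(\ell)}_j(F)=F$; $S^{(\ell)}_j(\mathcal F)=\{S^{(\ell)}_j(F):F\in\mathcal F\}$. $\mathcal F$ is $\ell$-shifted if $S^{(\ell)}_j(\mathcal F)=\mathcal F$ for all $1<j\le n_\ell$, and coordinate-wise shifted if it is $\ell$-shifted for every $\ell$. A non-trivial $t$-intersecting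 family $\mathcal F$ is $\ell$-shift-resistant if there exists $x\in X_\ell\setminus\{1\}$ such that $|\bigcap S^{(\ell)}_x(\mathcal F)|=t$. *)

theory Defs
  imports "HOL-Library.FuncSet"
begin

text \<open>Sequences in X_1 x ... x X_r with X_l = [n] are extensional functions
  on the coordinate set {1..r} with values in {1..n}.\<close>

definition grid :: "nat \<Rightarrow> nat \<Rightarrow> (nat \<Rightarrow> nat) set" where
  "grid r n = PiE {1..r} (\<lambda>_. {1..n})"

definition agree :: "nat \<Rightarrow> (nat \<Rightarrow> nat) \<Rightarrow> (nat \<Rightarrow> nat) \<Rightarrow> nat set" where
  "agree r A B = {l \<in> {1..r}. A l = B l}"

definition t_intersecting :: "nat \<Rightarrow> nat \<Rightarrow> (nat \<Rightarrow> nat) set \<Rightarrow> bool" where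
  "t_intersecting r t F \<longleftrightarrow> (\<forall>A\<in>F. \<forall>B\<in>F. card (agree r A B) \<ge> t)"

definition common :: "nat \<Rightarrow> (nat \<Rightarrow> nat) set \<Rightarrow> nat set" where
  "common r F = {l \<in> {1..r}. \<forall>A\<in>F. \<forall>B\<in>F. A l = B l}"

definition nontrivial_t_intersecting :: "nat \<Rightarrow> nat \<Rightarrow> (nat \<Rightarrow> nat) set \<Rightarrow> bool" where
  "nontrivial_t_intersecting r t F \<longleftrightarrow> t_intersecting r t F \<and> card (common r F) < t"

definition shift1 :: "nat \<Rightarrow> nat \<Rightarrow> (nat \<Rightarrow> nat) set \<Rightarrow> (nat \<Rightarrow> nat) \<Rightarrow> (nat \<Rightarrow> nat)" where
  "shift1 l j F A = (if A l = j \<and> A(l := 1) \<notin> F then A(l := 1) else A)"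

definition shift :: "nat \<Rightarrow> nat \<Rightarrow> (nat \<Rightarrow> nat) set \<Rightarrow> (nat \<Rightarrow> nat) set" where
  "shift l j F = shift1 l j F ` F"

definition l_shifted :: "nat \<Rightarrow> nat \<Rightarrow> (nat \<Rightarrow> nat) set \<Rightarrow> bool" where
  "l_shifted n l F \<longleftrightarrow> (\<forall>j\<in>{2..n}. shift l j F = F)"

definition coord_shifted :: "nat \<Rightarrow> nat \<Rightarrow> (nat \<Rightarrow> nat) set \<Rightarrow> bool" where
  "coord_shifted r n F \<longleftrightarrow> (\<forall>l\<in>{1..r}. l_shifted n l F)"

definition shift_resistant :: "nat \<Rightarrow> nat \<Rightarrow> nat \<Rightarrow> nat \<Rightarrow> (nat \<Rightarrow> nat) set \<Rightarrow> bool" where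
  "shift_resistant r n t l F \<longleftrightarrow> nontrivial_t_intersecting r t F \<and>
     (\<exists>x\<in>{2..n}. card (common r (shift l x F)) = t)"

end

theory Submission
  imports Defs
begin

text \<open>Let L be a coordinate on which F is not shifted, hence shift-resistant via some x.
  Gaining a common coordinate by shifting at L forces every member of F to have value 1 or x
  at L, and the members with value x to have their 1-version outside F; moreover the common
  coordinates of the shifted family other than L are already common to F. Shifting F at
  every coordinate outside these t common coordinates would turn a member with value x at L
  into one whose 1-version lies in F, so there is a second non-shifted coordinate l outside
  them. Resetting l to 1 is then injective on F, and each of the two fibres of F over the
  value at L is mapped into a set of sequences that agree on t + 1 coordinates. Hence
  |F| \<le> 2 n^(r-t-1), which is at most the claimed bound since t + 1 \<le> t n.\<close>

lemma finite_grid: "finite (grid r n)"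
  unfolding grid_def by (rule finite_PiE) auto

lemma grid_mem: "A \<in> grid r n \<Longrightarrow> i \<in> {1..r} \<Longrightarrow> A i \<in> {1..n}"
  unfolding grid_def by (rule PiE_mem)

lemma grid_arb: "A \<in> grid r n \<Longrightarrow> i \<notin> {1..r} \<Longrightarrow> A i = undefined"
  unfolding grid_def by (rule PiE_arb)

lemma fun_upd_one_in_grid:
  assumes "A \<in> grid r n" "l \<in> {1..r}" "n \<ge> 1"
  shows "A(l := 1) \<in> grid r n"
  using PiE_fun_upd[of 1 "\<lambda>_. {1..n}" l A "{1..r}"] assms
  unfolding grid_def by (simp add: insert_absorb)

lemma common_subset: "common r F \<subseteq> {1..r}"
  unfolding common_def by auto

lemma finite_common: "finite (common r F)"
  using common_subset finite_subset by blast

lemma card_le_if_common_superset: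
  assumes "G \<subseteq> grid r n" "V \<subseteq> common r G"
  shows "card G \<le> n ^ (r - card V)"
proof (cases "G = {}")
  case False
  then obtain A0 where "A0 \<in> G" by blast
  define box where "box = PiE {1..r} (\<lambda>i. if i \<in> V then {A0 i} else {1..n})"
  have V: "V \<subseteq> {1..r}"
    using assms(2) common_subset by blast
  have "G \<subseteq> box"
  proof
    fix A assume "A \<in> G"
    then have "A \<in> grid r n" "\<forall>i\<in>V. A i = A0 i"
      using assms \<open>A0 \<in> G\<close> unfolding common_def by auto
    then show "A \<in> box"
      unfolding box_def grid_def by (auto simp: PiE_iff)
  qed
  moreover have "card box = n ^ (r - card V)"
  proof -
    have "card box = (\<Prod>i\<in>{1..r}. if i \<in> V then 1 else n)"
      unfolding box_def by (subst card_PiE) (auto intro: prod.cong)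
    also have "\<dots> = (\<Prod>i\<in>{1..r} - V. n)"
      by (subst prod.If_cases) (auto simp: Diff_eq)
    also have "\<dots> = n ^ (r - card V)"
      using V by (simp add: card_Diff_subset finite_subset)
    finally show ?thesis .
  qed
  moreover have "finite box"
    unfolding box_def by (rule finite_PiE) auto
  ultimately show ?thesis
    by (metis card_mono)
qed simp

lemma shift1_apply_other: "k \<noteq> l \<Longrightarrow> shift1 l j F A k = A k"
  unfolding shift1_def by simp

lemma common_shift_subset: "common r (shift l x F) \<subseteq> insert l (common r F)"
proof
  fix k assume k: "k \<in> common r (shift l x F)"
  show "k \<in> insert l (common r F)"
  proof (cases "k = l")
    case False
    have "A k = B k" if "A \<in> F" "B \<in> F" for A B
      using k that shift1_apply_other[OF False] unfolding common_def shift_def by force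
    with k show ?thesis
      unfolding common_def by auto
  qed simp
qed

lemma shift_one_eq: "shift l 1 F = F"
  unfolding shift_def shift1_def by (auto simp: image_iff fun_upd_idem)

lemma card_common_shift_less_imp:
  assumes "card (common r F) < card (common r (shift l x F))"
  shows "l \<in> common r (shift l x F)" and "l \<notin> common r F" and "x \<noteq> 1"
proof -
  show "x \<noteq> 1"
    using assms shift_one_eq by auto
  have "\<not> common r (shift l x F) \<subseteq> common r F"
    using assms card_mono[OF finite_common] by (meson leD)
  then show "l \<in> common r (shift l x F)" "l \<notin> common r F"
    using common_shift_subset[of r l x F] by auto
qed

lemma values_at_resistant_coord:
  assumes "card (common r F) < card (common r (shift l x F))"
  shows "\<forall>A\<in>F. A l = 1 \<or> (A l = x \<and> A(l := 1) \<notin> F)"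
proof -
  have "shift l x F \<noteq> F"
    using assms by auto
  then obtain A0 where A0: "A0 \<in> F" "A0 l = x" "A0(l := 1) \<notin> F"
    unfolding shift_def shift1_def by (auto split: if_splits)
  have "shift1 l x F A0 l = 1"
    using A0 unfolding shift1_def by simp
  moreover have "shift1 l x F A l = shift1 l x F A0 l" if "A \<in> F" for A
    using card_common_shift_less_imp(1)[OF assms] that A0(1)
    unfolding common_def shift_def by blast
  ultimately have shifted_to_1: "shift1 l x F A l = 1" if "A \<in> F" for A
    using that by simp
  show ?thesis
  proof
    fix A assume "A \<in> F"
    from shifted_to_1[OF this] show "A l = 1 \<or> (A l = x \<and> A(l := 1) \<notin> F)"
      unfolding shift1_def by (auto split: if_splits)
  qed
qed

lemma resistant_coord_takes_both_values:
  assumes "card (common r F) < card (common r (shift l x F))"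
  shows "\<exists>A\<in>F. A l = 1" and "\<exists>A\<in>F. A l = x"
proof -
  have "l \<in> {1..r}"
    using card_common_shift_less_imp(1)[OF assms] common_subset by blast
  then obtain A B where "A \<in> F" "B \<in> F" "A l \<noteq> B l"
    using card_common_shift_less_imp(2)[OF assms] unfolding common_def by blast
  with values_at_resistant_coord[OF assms]
  show "\<exists>A\<in>F. A l = 1" "\<exists>A\<in>F. A l = x"
    by metis+
qed

lemma l_shifted_fun_upd_one:
  assumes "l_shifted n l F" "F \<subseteq> grid r n" "l \<in> {1..r}" "A \<in> F"
  shows "A(l := 1) \<in> F"
proof (cases "A l = 1")
  case True
  then show ?thesis
    using assms(4) by (metis fun_upd_triv)
next
  case False
  have "A l \<in> {1..n}"
    using assms(2-4) grid_mem by blast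
  with False assms(1) have "shift l (A l) F = F"
    unfolding l_shifted_def by auto
  then have "shift1 l (A l) F A \<in> F"
    using assms(4) unfolding shift_def by blast
  then show ?thesis
    unfolding shift1_def by (auto split: if_splits)
qed

lemma l_shifted_reset_to_one:
  assumes "finite S" "S \<subseteq> {1..r}" "\<forall>l\<in>S. l_shifted n l F" "F \<subseteq> grid r n" "A \<in> F"
  shows "(\<lambda>i. if i \<in> S then 1 else A i) \<in> F"
  using assms
proof (induction S rule: finite_induct)
  case (insert l S)
  have "(\<lambda>i. if i \<in> insert l S then 1 else A i) = (\<lambda>i. if i \<in> S then 1 else A i)(l := 1)"
    by auto
  with insert show ?case
    using l_shifted_fun_upd_one[of n l F r] by simp
qed simp

text \<open>Two members with values x and 1 at L agree on the common coordinates of the shifted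
  family other than L; resetting all the remaining coordinates to 1 keeps them in F and makes
  the second one the 1-version of the first.\<close>

lemma exists_other_non_shifted_coord:
  assumes "F \<subseteq> grid r n" "card (common r F) < card (common r (shift L x F))"
  shows "\<exists>l \<in> {1..r} - common r (shift L x F). \<not> l_shifted n l F"
proof (rule ccontr)
  define T where "T = common r (shift L x F)"
  define R where "R = {1..r} - T"
  assume "\<not> ?thesis"
  then have shifted: "\<forall>l\<in>R. l_shifted n l F"
    unfolding R_def T_def by blast
  have "L \<in> T"
    unfolding T_def using card_common_shift_less_imp(1)[OF assms(2)] .
  obtain A1 where A1: "A1 \<in> F" "A1 L = 1"
    using resistant_coord_takes_both_values(1)[OF assms(2)] by blast
  obtain Ax where Ax: "Ax \<in> F" "Ax L = x"
    using resistant_coord_takes_both_values(2)[OF assms(2)] by blast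
  define A' where "A' = (\<lambda>i. if i \<in> R then 1 else Ax i)"
  define B' where "B' = (\<lambda>i. if i \<in> R then 1 else A1 i)"
  have "A' \<in> F" "B' \<in> F"
    unfolding A'_def B'_def
    using l_shifted_reset_to_one[of R r n F] shifted assms(1) Ax(1) A1(1)
    by (auto simp: R_def)
  have "Ax i = A1 i" if "i \<in> T - {L}" for i
    using that common_shift_subset[of r L x F] Ax(1) A1(1) unfolding T_def common_def by blast
  moreover have "Ax i = A1 i" if "i \<notin> {1..r}" for i
    using that assms(1) Ax(1) A1(1) grid_arb by (metis subsetD)
  ultimately have "A'(L := 1) = B'"
    using \<open>L \<in> T\<close> A1(2) unfolding A'_def B'_def R_def by (auto simp: fun_eq_iff)
  moreover have "A' L = x"
    using \<open>L \<in> T\<close> Ax(2) unfolding A'_def R_def by simp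
  with values_at_resistant_coord[OF assms(2)] \<open>A' \<in> F\<close> card_common_shift_less_imp(3)[OF assms(2)]
  have "A'(L := 1) \<notin> F"
    by auto
  with \<open>A'(L := 1) = B'\<close> \<open>B' \<in> F\<close> show False
    by simp
qed

lemma inj_on_fun_upd_one:
  assumes "\<forall>A\<in>F. A l = 1 \<or> (A l = y \<and> A(l := 1) \<notin> F)"
  shows "inj_on (\<lambda>A. A(l := 1)) F"
proof (rule inj_onI)
  fix A B assume "A \<in> F" "B \<in> F" and eq: "A(l := 1) = B(l := 1)"
  show "A = B"
  proof (cases "A l = B l")
    case True
    with eq show ?thesis
      by (metis fun_upd_triv fun_upd_upd)
  next
    case False
    with assms \<open>A \<in> F\<close> \<open>B \<in> F\<close> eq show ?thesis
      by (metis fun_upd_triv)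
  qed
qed

lemma card_fibre_le:
  assumes "F \<subseteq> grid r n" "n \<ge> 1" "inj_on (\<lambda>A. A(l := 1)) F"
    and "L \<in> {1..r}" "l \<in> {1..r}" "L \<noteq> l" "D \<subseteq> common r F" "L \<notin> D" "l \<notin> D"
  shows "card {A\<in>F. A L = c} \<le> n ^ (r - card D - 2)"
proof -
  let ?G = "(\<lambda>A. A(l := 1)) ` {A\<in>F. A L = c}"
  have "?G \<subseteq> grid r n"
    using assms(1,2,5) fun_upd_one_in_grid by blast
  moreover have "insert L (insert l D) \<subseteq> common r ?G"
    using assms(4-7) unfolding common_def by auto
  ultimately have "card ?G \<le> n ^ (r - card (insert L (insert l D)))"
    by (rule card_le_if_common_superset)
  moreover have "card ?G = card {A\<in>F. A L = c}"
    by (rule card_image) (rule inj_on_subset[OF assms(3)], blast)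
  moreover have "card (insert L (insert l D)) = card D + 2"
    using assms(6,8,9) finite_subset[OF assms(7) finite_common] by simp
  ultimately show ?thesis
    by (simp add: diff_diff_add)
qed

lemma card_le_two_fibres:
  assumes "F \<subseteq> grid r n" "n \<ge> 1" "inj_on (\<lambda>A. A(l := 1)) F"
    and "L \<in> {1..r}" "l \<in> {1..r}" "L \<noteq> l" "D \<subseteq> common r F" "L \<notin> D" "l \<notin> D"
    and "\<forall>A\<in>F. A L = 1 \<or> A L = x"
  shows "card F \<le> 2 * n ^ (r - card D - 2)"
proof -
  have "finite F"
    using assms(1) finite_grid finite_subset by blast
  then have "card F \<le> card ({A\<in>F. A L = 1} \<union> {A\<in>F. A L = x})"
    using assms(10) by (intro card_mono) auto
  also have "\<dots> \<le> card {A\<in>F. A L = 1} + card {A\<in>F. A L = x}"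
    by (rule card_Un_le)
  also have "\<dots> \<le> 2 * n ^ (r - card D - 2)"
    using card_fibre_le[OF assms(1-9), of 1] card_fibre_le[OF assms(1-9), of x] by simp
  finally show ?thesis .
qed

lemma two_pow_le_bound:
  assumes "t \<ge> 1" "n \<ge> 2"
  shows "2 * int n ^ Suc k \<le> int (t + 2) * int n ^ Suc k - int (t + 1) * int n ^ k"
proof -
  have "int (t + 1) \<le> int t * int n"
    using assms mult_left_mono[of 2 "int n" "int t"] by linarith
  then have "int (t + 1) * int n ^ k \<le> int t * int n * int n ^ k"
    by (simp add: mult_right_mono)
  then show ?thesis
    by (simp add: algebra_simps)
qed

theorem lemma2p3:
  fixes r t n :: nat and F :: "(nat \<Rightarrow> nat) set"
  assumes "r \<ge> 3" and "1 \<le> t" and "t \<le> r - 2" and "n \<ge> 2"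
    and "F \<subseteq> grid r n"
    and "nontrivial_t_intersecting r t F"
    and "\<forall>l\<in>{1..r}. l_shifted n l F \<or> shift_resistant r n t l F"
    and "\<not> coord_shifted r n F"
  shows "int (card F) \<le> int (t + 2) * int n ^ (r - t - 1) - int (t + 1) * int n ^ (r - t - 2)"
proof -
  have resistant: "\<exists>x. card (common r F) < card (common r (shift l x F))
      \<and> card (common r (shift l x F)) = t" if "l \<in> {1..r}" "\<not> l_shifted n l F" for l
    using assms(6,7) that unfolding shift_resistant_def nontrivial_t_intersecting_def by fastforce
  obtain L where L: "L \<in> {1..r}" "\<not> l_shifted n L F"
    using assms(8) unfolding coord_shifted_def by blast
  with resistant obtain x where x: "card (common r F) < card (common r (shift L x F))"
    and card_T: "card (common r (shift L x F)) = t" by blast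
  define T where "T = common r (shift L x F)"
  obtain l where l: "l \<in> {1..r} - T" "\<not> l_shifted n l F"
    using exists_other_non_shifted_coord[OF assms(5) x] unfolding T_def by blast
  with resistant obtain y where y: "card (common r F) < card (common r (shift l y F))" by blast
  have "L \<in> T"
    using card_common_shift_less_imp(1)[OF x] unfolding T_def .
  have common_T: "T - {L} \<subseteq> common r F"
    using common_shift_subset[of r L x F] unfolding T_def by blast
  have values_L: "\<forall>A\<in>F. A L = 1 \<or> A L = x"
    using values_at_resistant_coord[OF x] by blast
  have "card F \<le> 2 * n ^ (r - card (T - {L}) - 2)"
    by (rule card_le_two_fibres[OF assms(5) _ inj_on_fun_upd_one[OF values_at_resistant_coord[OF y]]
          L(1) _ _ common_T _ _ values_L])
      (use assms(4) l \<open>L \<in> T\<close> in auto)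
  moreover have "card (T - {L}) = t - 1"
    using \<open>L \<in> T\<close> card_T finite_common unfolding T_def by simp
  moreover have "r - (t - 1) - 2 = Suc (r - t - 2)"
    using assms(1-3) by auto
  ultimately have "int (card F) \<le> int (2 * n ^ Suc (r - t - 2))"
    by (metis of_nat_mono)
  also have "\<dots> = 2 * int n ^ Suc (r - t - 2)"
    by simp
  also have "\<dots> \<le> int (t + 2) * int n ^ Suc (r - t - 2) - int (t + 1) * int n ^ (r - t - 2)"
    by (rule two_pow_le_bound[OF assms(2,4)])
  also have "Suc (r - t - 2) = r - t - 1"
    using assms(1-3) by auto
  finally show ?thesis .
qed

end
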